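(* Let $C_1,\dots,C_n:\mathbb R\to\mathbb R$ be strictly convex and continuously differentiable and satisfy Assumption A2 with scaling factors $\zeta_i>0$, $\boldsymbol Z=\mathrm{diag}(\zeta_i)$. Let $\boldsymbol L_Q$ be the Laplacian of a connected undirected graph on $\{1,\dots,n\}$ with symmetric positive edge weights. Then for every $\boldsymbol u\in\mathbb R^n$, $$\boldsymbol u^T\boldsymbol Z\boldsymbol L_Q\nabla C(\boldsymbol u)\ge0,$$ with equality if and only if $\nabla C(\boldsymbol u)\in\mathrm{range}(\mathbf 1_n)$, i.e. $\nabla C_1(u_1)=\dots=\nabla C_n(u_n)$. (In particular this holds for $\boldsymbol u=\boldsymbol u(\boldsymbol s)$ for any $\boldsymbol s$.)
   Context: Assumption A2: there exist a strictly convex $C^1$ function $C_{\mathrm o}:\mathbb R\to\mathbb R$ and $\zeta_i>0$ such that $\nabla C_i(u)=\nabla C_{\mathrm o}(\zeta_iu)$ for all $u\in\mathbb R$ and all $i$. $\nabla C(\boldsymbol u)=(\nabla C_i(u_i))_{i=1}^n$. Laplacian: $(\boldsymbol L_Q)_{ij}=-Q_{ij}$ for $i\ne j$, $(\boldsymbol L_Q)_{ii}=\sum_{j\ne i}Q_{ij}$, with $Q_{ij}=Q_{ji}>0$ on edges and $0$ otherwise. *)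

theory Defs
  imports "HOL-Analysis.Analysis"
begin

definition strictly_convex_on :: "real set \<Rightarrow> (real \<Rightarrow> real) \<Rightarrow> bool" where
  "strictly_convex_on S f \<longleftrightarrow>
     (\<forall>x\<in>S. \<forall>y\<in>S. x \<noteq> y \<longrightarrow>
        (\<forall>t::real. 0 < t \<and> t < 1 \<longrightarrow> f ((1 - t) * x + t * y) < (1 - t) * f x + t * f y))"

definition laplacian :: "('n::finite \<Rightarrow> 'n \<Rightarrow> real) \<Rightarrow> real^'n^'n" where
  "laplacian Q = (\<chi> i j. if i = j then (\<Sum>k\<in>UNIV - {i}. Q i k) else - Q i j)"

definition diag_mat :: "('n::finite \<Rightarrow> real) \<Rightarrow> real^'n^'n" where
  "diag_mat z = (\<chi> i j. if i = j then z i else 0)"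

text \<open>Q encodes the weights of an undirected graph on the index set: symmetric, nonnegative,
  the edges being the pairs i \<noteq> j with Q i j > 0 (weight 0 means no edge).\<close>
definition edge_weights :: "('n \<Rightarrow> 'n \<Rightarrow> real) \<Rightarrow> bool" where
  "edge_weights Q \<longleftrightarrow> (\<forall>i j. Q i j = Q j i) \<and> (\<forall>i j. Q i j \<ge> 0)"

definition graph_connected :: "('n \<Rightarrow> 'n \<Rightarrow> real) \<Rightarrow> bool" where
  "graph_connected Q \<longleftrightarrow> (\<forall>i j. (i, j) \<in> {(a, b). a \<noteq> b \<and> Q a b > 0}\<^sup>*)"

end

theory Submission
  imports Defs
begin

text \<open>With \<open>w = Z u\<close> and \<open>g = \<nabla>C(u)\<close>, Assumption A2 gives \<open>g\<^sub>i = \<nabla>C\<^sub>o(w\<^sub>i)\<close> for a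
  strictly increasing \<open>\<nabla>C\<^sub>o\<close>, and by symmetry of \<open>Q\<close> the quantity
  \<open>u\<^sup>T Z L\<^sub>Q g = w\<^sup>T L\<^sub>Q g\<close> equals \<open>\<Sum>\<^sub>i\<^sub>,\<^sub>j Q\<^sub>i\<^sub>j (w\<^sub>i - w\<^sub>j)(g\<^sub>i - g\<^sub>j) / 2\<close>.
  Every summand is nonnegative by monotonicity, so the sum vanishes only if \<open>g\<^sub>i = g\<^sub>j\<close> across
  every edge, which by connectivity forces \<open>g\<close> to be constant.  Only the strict convexity of
  \<open>C\<^sub>o\<close> enters.\<close>

lemma strictly_convex_on_imp_convex_on:
  assumes "strictly_convex_on UNIV f"
  shows "convex_on UNIV f"
proof (rule convex_on_linorderI)
  fix t x y :: real
  assume "0 < t" "t < 1" "x < y"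
  then show "f ((1 - t) *\<^sub>R x + t *\<^sub>R y) \<le> (1 - t) * f x + t * f y"
    using assms unfolding strictly_convex_on_def by (simp add: less_imp_le)
qed simp

lemma convex_on_deriv_le_slope:
  fixes f df :: "real \<Rightarrow> real"
  assumes f: "convex_on UNIV f"
    and deriv: "\<And>x. (f has_real_derivative df x) (at x)"
    and "x < y"
  shows "df x \<le> (f y - f x) / (y - x)" and "(f y - f x) / (y - x) \<le> df y"
proof -
  have slope_at_right: "((\<lambda>t. (f t - f x) / (t - x)) \<longlongrightarrow> df x) (at_right x)"
    using deriv[of x] unfolding has_field_derivative_iff by (rule filterlim_mono) (simp_all add: at_le)
  have slope_at_left: "((\<lambda>t. (f t - f y) / (t - y)) \<longlongrightarrow> df y) (at_left y)"
    using deriv[of y] unfolding has_field_derivative_iff by (rule filterlim_mono) (simp_all add: at_le)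
  have swap: "(a - b) / (c - d) = (b - a) / (d - c)" for a b c d :: real
    by (metis minus_diff_eq minus_divide_divide)
  have "\<forall>\<^sub>F t in at_right x. (f t - f x) / (t - x) \<le> (f y - f x) / (y - x)"
    unfolding eventually_at_right_field
    using convex_on_slope_le(1)[OF f UNIV_I UNIV_I] \<open>x < y\<close> by (metis swap)
  then show "df x \<le> (f y - f x) / (y - x)"
    by (rule tendsto_upperbound[OF slope_at_right]) simp
  have "\<forall>\<^sub>F t in at_left y. (f y - f x) / (y - x) \<le> (f t - f y) / (t - y)"
    unfolding eventually_at_left_field
    using convex_on_slope_le(2)[OF f UNIV_I UNIV_I] \<open>x < y\<close> by (metis swap)
  then show "(f y - f x) / (y - x) \<le> df y"
    by (rule tendsto_lowerbound[OF slope_at_left]) simp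
qed

lemma strictly_convex_on_deriv_strict_mono:
  fixes f df :: "real \<Rightarrow> real"
  assumes f: "strictly_convex_on UNIV f"
    and deriv: "\<And>x. (f has_real_derivative df x) (at x)"
  shows "strict_mono df"
proof (rule strict_monoI)
  fix x y :: real
  assume "x < y"
  define z where "z = (x + y) / 2"
  have "x < z" "z < y" "z - x = y - z"
    using \<open>x < y\<close> by (simp_all add: z_def field_simps)
  have "\<forall>t. 0 < t \<and> t < 1 \<longrightarrow> f ((1 - t) * x + t * y) < (1 - t) * f x + t * f y"
    using f \<open>x < y\<close> unfolding strictly_convex_on_def by auto
  from this[rule_format, of "1/2"]
  have "f ((1 - 1/2) * x + 1/2 * y) < (1 - 1/2) * f x + 1/2 * f y"
    by simp
  moreover have "(1 - 1/2) * x + 1/2 * y = z"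
    by (simp add: z_def)
  ultimately have "f z - f x < f y - f z"
    by simp
  then have "(f z - f x) / (z - x) < (f y - f z) / (z - x)"
    using \<open>x < z\<close> by (simp add: divide_strict_right_mono)
  then have "(f z - f x) / (z - x) < (f y - f z) / (y - z)"
    by (simp only: \<open>z - x = y - z\<close>)
  moreover have "df x \<le> (f z - f x) / (z - x)" "(f y - f z) / (y - z) \<le> df y"
    using convex_on_deriv_le_slope[OF strictly_convex_on_imp_convex_on[OF f] deriv]
      \<open>x < z\<close> \<open>z < y\<close> by blast+
  ultimately show "df x < df y"
    by linarith
qed

lemma strict_mono_mult_diff_nonneg:
  fixes h :: "real \<Rightarrow> real"
  assumes "strict_mono h"
  shows "0 \<le> (a - b) * (h a - h b)"
proof (cases a b rule: linorder_cases)
  case less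
  then show ?thesis
    using strict_monoD[OF assms less] by (simp add: mult_nonpos_nonpos)
next
  case greater
  then show ?thesis
    using strict_monoD[OF assms greater] by simp
qed simp

lemma strict_mono_mult_diff_eq_0_iff:
  fixes h :: "real \<Rightarrow> real"
  assumes "strict_mono h"
  shows "(a - b) * (h a - h b) = 0 \<longleftrightarrow> a = b"
  using strict_mono_eq[OF assms, of a b] by auto

lemma diag_mat_mult_vec_nth: "(diag_mat z *v w) $ i = z i * w $ i"
  unfolding diag_mat_def matrix_vector_mult_def
  by (simp add: if_distrib [of "\<lambda>c. c * _"] cong: if_cong)

lemma inner_diag_mat_mult_vec: "u \<bullet> (diag_mat z *v v) = (diag_mat z *v u) \<bullet> v"
  by (simp add: inner_vec_def diag_mat_mult_vec_nth mult_ac)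

lemma laplacian_mult_vec_nth:
  "(laplacian Q *v g) $ i = (\<Sum>j\<in>UNIV. Q i j * (g $ i - g $ j))"
proof -
  have "(laplacian Q *v g) $ i
      = (\<Sum>k\<in>UNIV - {i}. Q i k) * g $ i + (\<Sum>j\<in>UNIV - {i}. - Q i j * g $ j)"
    by (simp add: laplacian_def matrix_vector_mult_def sum.remove[of UNIV i])
  also have "\<dots> = (\<Sum>j\<in>UNIV - {i}. Q i j * (g $ i - g $ j))"
    by (simp add: sum_distrib_right sum_subtractf right_diff_distrib sum_negf)
  also have "\<dots> = (\<Sum>j\<in>UNIV. Q i j * (g $ i - g $ j))"
    by (simp add: sum.remove[of UNIV i "\<lambda>j. Q i j * (g $ i - g $ j)"])
  finally show ?thesis .
qed

lemma laplacian_mult_const_vec: "laplacian Q *v (\<chi> i. c) = 0"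
  by (simp add: vec_eq_iff laplacian_mult_vec_nth)

lemma inner_laplacian_mult_vec:
  assumes "\<And>i j. Q i j = Q j i"
  shows "2 * (w \<bullet> (laplacian Q *v g)) =
    (\<Sum>i\<in>UNIV. \<Sum>j\<in>UNIV. Q i j * ((w $ i - w $ j) * (g $ i - g $ j)))"
proof -
  have swapped: "Q j i * w $ j * (g $ j - g $ i) = - (Q i j * w $ j * (g $ i - g $ j))" for i j
    using assms[of j i] by (simp add: algebra_simps)
  have combined: "Q i j * w $ i * (g $ i - g $ j) + - (Q i j * w $ j * (g $ i - g $ j))
      = Q i j * ((w $ i - w $ j) * (g $ i - g $ j))" for i j
    by (simp add: algebra_simps)
  have form: "w \<bullet> (laplacian Q *v g)
      = (\<Sum>i\<in>UNIV. \<Sum>j\<in>UNIV. Q i j * w $ i * (g $ i - g $ j))"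
    by (simp add: inner_vec_def laplacian_mult_vec_nth sum_distrib_left mult_ac)
  also have "\<dots> = (\<Sum>i\<in>UNIV. \<Sum>j\<in>UNIV. - (Q i j * w $ j * (g $ i - g $ j)))"
    by (subst sum.swap) (simp only: swapped)
  finally have "2 * (w \<bullet> (laplacian Q *v g)) =
      (\<Sum>i\<in>UNIV. \<Sum>j\<in>UNIV. Q i j * w $ i * (g $ i - g $ j))
      + (\<Sum>i\<in>UNIV. \<Sum>j\<in>UNIV. - (Q i j * w $ j * (g $ i - g $ j)))"
    using form by linarith
  then show ?thesis
    by (simp only: sum.distrib[symmetric] combined)
qed

lemma graph_connected_const:
  assumes "graph_connected Q"
    and edge: "\<And>a b. Q a b > 0 \<Longrightarrow> f a = f b"
  shows "f i = f j"
proof -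
  have "(i, j) \<in> {(a, b). a \<noteq> b \<and> Q a b > 0}\<^sup>*"
    using assms(1) unfolding graph_connected_def by blast
  then show ?thesis
  proof (induction rule: rtrancl_induct)
    case (step k l)
    then show ?case
      using edge[of k l] by simp
  qed simp
qed

lemma edge_weightsD:
  assumes "edge_weights Q"
  shows "Q i j = Q j i" and "0 \<le> Q i j"
  using assms unfolding edge_weights_def by auto

lemma inner_laplacian_strict_mono_nonneg:
  fixes h :: "real \<Rightarrow> real"
  assumes "edge_weights Q" and "strict_mono h"
  shows "0 \<le> w \<bullet> (laplacian Q *v (\<chi> i. h (w $ i)))"
proof -
  have "0 \<le> (\<Sum>i\<in>UNIV. \<Sum>j\<in>UNIV. Q i j * ((w $ i - w $ j) * (h (w $ i) - h (w $ j))))"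
    by (intro sum_nonneg mult_nonneg_nonneg edge_weightsD(2)[OF assms(1)]
        strict_mono_mult_diff_nonneg[OF assms(2)])
  then show ?thesis
    using inner_laplacian_mult_vec[of Q w "\<chi> i. h (w $ i)", OF edge_weightsD(1)[OF assms(1)]]
    by simp
qed

lemma inner_laplacian_strict_mono_eq_0_iff:
  fixes h :: "real \<Rightarrow> real"
  assumes "edge_weights Q" and "graph_connected Q" and "strict_mono h"
  shows "w \<bullet> (laplacian Q *v (\<chi> i. h (w $ i))) = 0
    \<longleftrightarrow> (\<chi> i. h (w $ i)) \<in> range (\<lambda>c. \<chi> i. c)"
proof
  define T where "T i j = Q i j * ((w $ i - w $ j) * (h (w $ i) - h (w $ j)))" for i j
  have T_nonneg: "0 \<le> T i j" for i j
    unfolding T_def by (intro mult_nonneg_nonneg edge_weightsD(2)[OF assms(1)]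
        strict_mono_mult_diff_nonneg[OF assms(3)])
  assume "w \<bullet> (laplacian Q *v (\<chi> i. h (w $ i))) = 0"
  then have "(\<Sum>i\<in>UNIV. \<Sum>j\<in>UNIV. T i j) = 0"
    using inner_laplacian_mult_vec[of Q w "\<chi> i. h (w $ i)", OF edge_weightsD(1)[OF assms(1)]]
    by (simp add: T_def)
  then have "T i j = 0" for i j
    using T_nonneg by (simp add: sum_nonneg sum_nonneg_eq_0_iff)
  then have "w $ a = w $ b" if "Q a b > 0" for a b
    using that strict_mono_mult_diff_eq_0_iff[OF assms(3)] unfolding T_def
    by (metis mult_eq_0_iff less_irrefl)
  then have "w $ i = w $ j" for i j
    using graph_connected_const[OF assms(2)] by blast
  then have "(\<chi> i. h (w $ i)) = (\<chi> i. h (w $ j))" for j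
    by (simp add: vec_eq_iff) metis
  then show "(\<chi> i. h (w $ i)) \<in> range (\<lambda>c. \<chi> i. c)"
    by blast
qed (auto simp only: laplacian_mult_const_vec inner_zero_right)

theorem corollary1:
  fixes C :: "'n::finite \<Rightarrow> real \<Rightarrow> real"
    and dC :: "'n \<Rightarrow> real \<Rightarrow> real"
    and Co dCo :: "real \<Rightarrow> real"
    and \<zeta> :: "'n \<Rightarrow> real"
    and Q :: "'n \<Rightarrow> 'n \<Rightarrow> real"
    and u :: "real^'n"
  assumes C_deriv: "\<And>i x. (C i has_real_derivative dC i x) (at x)"
    and C_C1: "\<And>i. continuous_on UNIV (dC i)"
    and C_strict: "\<And>i. strictly_convex_on UNIV (C i)"
    and Co_deriv: "\<And>x. (Co has_real_derivative dCo x) (at x)"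
    and Co_C1: "continuous_on UNIV dCo"
    and Co_strict: "strictly_convex_on UNIV Co"
    and zeta_pos: "\<And>i. \<zeta> i > 0"
    and A2: "\<And>i x. dC i x = dCo (\<zeta> i * x)"
    and Q_graph: "edge_weights Q"
    and Q_conn: "graph_connected Q"
  shows "u \<bullet> ((diag_mat \<zeta> ** laplacian Q) *v (\<chi> i. dC i (u $ i))) \<ge> 0
     \<and> (u \<bullet> ((diag_mat \<zeta> ** laplacian Q) *v (\<chi> i. dC i (u $ i))) = 0
          \<longleftrightarrow> (\<chi> i. dC i (u $ i)) \<in> range (\<lambda>c::real. (\<chi> i::'n. c)))"
proof -
  define w where "w = diag_mat \<zeta> *v u"
  have grad: "(\<chi> i. dC i (u $ i)) = (\<chi> i. dCo (w $ i))"
    by (simp add: vec_eq_iff w_def A2 diag_mat_mult_vec_nth)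
  have form: "u \<bullet> ((diag_mat \<zeta> ** laplacian Q) *v g) = w \<bullet> (laplacian Q *v g)" for g
    by (simp only: w_def matrix_vector_mul_assoc[symmetric] inner_diag_mat_mult_vec)
  have "strict_mono dCo"
    by (rule strictly_convex_on_deriv_strict_mono[OF Co_strict Co_deriv])
  then show ?thesis
    unfolding form grad
    using inner_laplacian_strict_mono_nonneg[OF Q_graph, where w = w]
      inner_laplacian_strict_mono_eq_0_iff[OF Q_graph Q_conn, where w = w] by simp
qed

end
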